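(* For every $\varepsilon>0$, the integrality gap of the cluster LP is at least $4/3-\varepsilon$; that is, there exists a Correlation Clustering instance whose optimum clustering cost $\mathrm{opt}$ satisfies $\mathrm{opt}\ge(4/3-\varepsilon)\cdot\mathrm{LP}^*$, where $\mathrm{LP}^*>0$ is the optimum value of the cluster LP for that instance.
   Context: A Correlation Clustering instance consists of a finite vertex set $V$ and a partition $E^+\uplus E^-=\binom V2$ of the unordered pairs of distinct vertices into $+$edges and $-$edges. A clustering is a partition of $V$; its cost is the number of $+$edges whose endpoints lie in different parts plus the number of $-$edges whose endpoints lie in the same part; $\mathrm{opt}$ is the minimum cost. For $x\in[0,1]^{\binom V2}$, $\mathrm{obj}(x)=\sum_{uv\in E^+}x_{uv}+\sum_{uv\in E^-}(1-x_{uv})$. The cluster LP has a variable $z_S$ for every nonempty $S\subseteq V$ and $x_{uv}$ for every $uv\in\binom V2$; it minimizes $\mathrm{obj}(x)$ subject to $\sum_{S\ni u}z_S=1$ for all $u$, $\sum_{S\supseteq\{u,v\}}z_S=1-x_{uv}$ for all $uv$, and $z_S\ge0$. The integrality gap is the supremum over instances of $\mathrm{opt}$ divided by the optimum LP value. *)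

theory Defs
  imports Complex_Main "HOL-Library.Disjoint_Sets"
begin

definition pairs :: "'a set \<Rightarrow> 'a set set" where
  "pairs V = {e. e \<subseteq> V \<and> card e = 2}"

text \<open>An instance is (V, Ep) with V finite and Ep \<subseteq> pairs V the +edges;
  the -edges are pairs V - Ep.\<close>
definition cc_instance :: "'a set \<Rightarrow> 'a set set \<Rightarrow> bool" where
  "cc_instance V Ep \<longleftrightarrow> finite V \<and> Ep \<subseteq> pairs V"

definition cc_cost :: "'a set \<Rightarrow> 'a set set \<Rightarrow> 'a set set \<Rightarrow> nat" where
  "cc_cost V Ep C =
     card {e \<in> Ep. \<not> (\<exists>S\<in>C. e \<subseteq> S)}
   + card {e \<in> pairs V - Ep. \<exists>S\<in>C. e \<subseteq> S}"

definition cc_opt :: "'a set \<Rightarrow> 'a set set \<Rightarrow> nat" where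
  "cc_opt V Ep = Min {cc_cost V Ep C | C. partition_on V C}"

definition cc_obj :: "'a set \<Rightarrow> 'a set set \<Rightarrow> ('a set \<Rightarrow> real) \<Rightarrow> real" where
  "cc_obj V Ep x = (\<Sum>e\<in>Ep. x e) + (\<Sum>e\<in>pairs V - Ep. 1 - x e)"

definition cluster_lp_feasible ::
  "'a set \<Rightarrow> ('a set \<Rightarrow> real) \<Rightarrow> ('a set \<Rightarrow> real) \<Rightarrow> bool" where
  "cluster_lp_feasible V z x \<longleftrightarrow>
     (\<forall>S. S \<subseteq> V \<and> S \<noteq> {} \<longrightarrow> z S \<ge> 0)
   \<and> (\<forall>u\<in>V. (\<Sum>S\<in>{S. S \<subseteq> V \<and> S \<noteq> {} \<and> u \<in> S}. z S) = 1)
   \<and> (\<forall>e\<in>pairs V. (\<Sum>S\<in>{S. S \<subseteq> V \<and> e \<subseteq> S}. z S) = 1 - x e)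
   \<and> (\<forall>e\<in>pairs V. 0 \<le> x e \<and> x e \<le> 1)"

definition cluster_lp_opt :: "'a set \<Rightarrow> 'a set set \<Rightarrow> real" where
  "cluster_lp_opt V Ep = Inf {cc_obj V Ep x | z x. cluster_lp_feasible V z x}"

end

(*
  The instance has the edges of the complete graph K_m as vertices, two of them joined by a
  +edge iff they share an endpoint (the line graph of K_m). Weight 1/2 on each of the m stars
  (the edges at a vertex of K_m) is a feasible cluster-LP solution in which every +edge is
  covered with weight 1/2 and every -edge not at all, so the LP optimum is at most
  |E+|/2 = (3/2) C(m,3).

  Conversely, the +edges fall into C(m,3) groups of three, one for each triangle of K_m. A
  clustering keeps at most one +edge of a triangle unless the triangle is monochromatic, i.e.
  its three edges lie in one cluster, and monochromatic triangles are paid for by -edges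
  inside clusters: if some vertex a of K_m is covered by at least four edges of one cluster,
  deleting these edges destroys at most one monochromatic triangle per remaining edge q of that
  cluster, while q is disjoint from at least two of the deleted edges; otherwise every edge lies
  in at most two monochromatic triangles. Hence every clustering costs at least
  2 C(m,3) - 4 C(m,2), and the ratio to (3/2) C(m,3) tends to 4/3.
*)

theory Submission
  imports Defs
begin

definition triples :: "'a set \<Rightarrow> 'a set set" where
  "triples V = {T. T \<subseteq> V \<and> card T = 3}"

lemma finite_pairs: "finite V \<Longrightarrow> finite (pairs V)"
  unfolding pairs_def by (rule finite_subset[of _ "Pow V"]) auto

lemma pairs_mono: "A \<subseteq> B \<Longrightarrow> pairs A \<subseteq> pairs B"
  unfolding pairs_def by auto

lemma card_pairs: "finite V \<Longrightarrow> card (pairs V) = card V choose 2"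
  unfolding pairs_def by (rule n_subsets)

lemma pairs_iff: "e \<in> pairs V \<longleftrightarrow> (\<exists>p\<in>V. \<exists>q\<in>V. p \<noteq> q \<and> e = {p, q})"
  unfolding pairs_def card_2_iff by auto

lemma finite_triples: "finite V \<Longrightarrow> finite (triples V)"
  unfolding triples_def by (rule finite_subset[of _ "Pow V"]) auto

lemma card_triples: "finite V \<Longrightarrow> card (triples V) = card V choose 3"
  unfolding triples_def by (rule n_subsets)

lemma card_Int_le_1_if_card_2:
  assumes "card A = 2" "card B = 2" "A \<noteq> B"
  shows "card (A \<inter> B) \<le> 1"
proof (rule ccontr)
  have fin: "finite A" "finite B" using assms by (auto intro: card_ge_0_finite)
  assume "\<not> ?thesis"
  moreover have "card (A \<inter> B) \<le> card A" "card (A \<inter> B) \<le> card B"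
    using fin by (simp_all add: card_mono)
  ultimately have "card (A \<inter> B) = card A" "card (A \<inter> B) = card B" using assms by simp_all
  then have "A \<inter> B = A" "A \<inter> B = B" using fin by (simp_all add: card_subset_eq)
  then show False using assms(3) by simp
qed

lemma card_Un_eq_3_if_card_2:
  assumes "card A = 2" "card B = 2" "A \<noteq> B" "A \<inter> B \<noteq> {}"
  shows "card (A \<union> B) = 3"
proof -
  have "finite A" "finite B" using assms by (auto intro: card_ge_0_finite)
  moreover have "card (A \<inter> B) = 1"
    using card_Int_le_1_if_card_2[OF assms(1-3)] assms(4) \<open>finite A\<close> by (simp add: le_Suc_eq)
  ultimately show ?thesis using card_Un_Int assms(1,2) by fastforce
qed

lemma card_eq_sum_card_fibres:
  assumes "finite A" "finite B" "f ` A \<subseteq> B"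
  shows "card A = (\<Sum>y\<in>B. card {x\<in>A. f x = y})"
proof -
  have "card A = (\<Sum>x\<in>A. 1)" by simp
  also have "\<dots> = (\<Sum>y\<in>B. \<Sum>x\<in>{x\<in>A. f x = y}. 1)"
    by (rule sum.group[symmetric, OF assms])
  finally show ?thesis by simp
qed

lemma card_doubletons_ge:
  assumes "finite F" "finite A" "A \<inter> F = {}"
    and "\<And>q. q \<in> F \<Longrightarrow> n \<le> card {p \<in> A. P p q}"
  shows "n * card F \<le> card ((\<lambda>(q, p). {p, q}) ` (SIGMA q:F. {p \<in> A. P p q}))"
proof -
  have "inj_on (\<lambda>(q, p). {p, q}) (SIGMA q:F. {p \<in> A. P p q})"
    using assms(3) unfolding inj_on_def by (auto simp: doubleton_eq_iff)
  then have "card ((\<lambda>(q, p). {p, q}) ` (SIGMA q:F. {p \<in> A. P p q})) = (\<Sum>q\<in>F. card {p \<in> A. P p q})"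
    using assms(1,2) by (simp add: card_image)
  also have "\<dots> \<ge> (\<Sum>q\<in>F. n)" using assms(4) by (rule sum_mono)
  finally show ?thesis by (simp add: mult.commute)
qed

definition monochromatic :: "('a \<Rightarrow> 'b) \<Rightarrow> 'a set \<Rightarrow> bool" where
  "monochromatic cl X \<longleftrightarrow> (\<forall>p\<in>X. \<forall>q\<in>X. cl p = cl q)"

lemma monochromatic_doubleton: "monochromatic cl {p, q} \<longleftrightarrow> cl p = cl q"
  unfolding monochromatic_def by auto

lemma card_monochromatic_pairs_le_1:
  assumes "card X = 3" "\<not> monochromatic cl X"
  shows "card {e \<in> pairs X. monochromatic cl e} \<le> 1"
proof -
  obtain x y w where X: "X = {x, y, w}" "x \<noteq> y" "y \<noteq> w" "x \<noteq> w"
    using assms(1) card_3_iff by metis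
  have pairs: "pairs X = {{x, y}, {x, w}, {y, w}}"
    using X(2-4) unfolding X(1) set_eq_iff pairs_iff by (auto simp: doubleton_eq_iff)
  have "\<not> (cl x = cl y \<and> cl x = cl w)"
    using assms(2) unfolding X(1) monochromatic_def by auto
  then have "e = e'" if "e \<in> pairs X" "e' \<in> pairs X" "monochromatic cl e" "monochromatic cl e'"
    for e e'
    using that unfolding pairs by (auto simp: monochromatic_doubleton)
  moreover have "finite (pairs X)"
    using assms(1) by (intro finite_pairs card_ge_0_finite) simp
  ultimately show ?thesis
    using card_le_Suc0_iff_eq[of "{e \<in> pairs X. monochromatic cl e}"] by auto
qed

section \<open>The cluster LP\<close>

definition cluster_lp_x :: "'a set \<Rightarrow> ('a set \<Rightarrow> real) \<Rightarrow> 'a set \<Rightarrow> real" where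
  "cluster_lp_x V z e = 1 - (\<Sum>S\<in>{S. S \<subseteq> V \<and> e \<subseteq> S}. z S)"

lemma finite_subsets_containing: "finite V \<Longrightarrow> finite {S. S \<subseteq> V \<and> P S}"
  by (rule finite_subset[of _ "Pow V"]) auto

lemma cluster_lp_feasible_cluster_lp_x:
  assumes "finite V"
    and nonneg: "\<And>S. S \<subseteq> V \<Longrightarrow> S \<noteq> {} \<Longrightarrow> z S \<ge> 0"
    and cover: "\<And>u. u \<in> V \<Longrightarrow> (\<Sum>S\<in>{S. S \<subseteq> V \<and> S \<noteq> {} \<and> u \<in> S}. z S) = 1"
  shows "cluster_lp_feasible V z (cluster_lp_x V z)"
proof -
  have "0 \<le> cluster_lp_x V z e \<and> cluster_lp_x V z e \<le> 1" if "e \<in> pairs V" for e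
  proof -
    obtain u where u: "u \<in> e" "u \<in> V" using \<open>e \<in> pairs V\<close> unfolding pairs_iff by blast
    have "(\<Sum>S\<in>{S. S \<subseteq> V \<and> e \<subseteq> S}. z S) \<le> (\<Sum>S\<in>{S. S \<subseteq> V \<and> S \<noteq> {} \<and> u \<in> S}. z S)"
      using u by (intro sum_mono2 finite_subsets_containing assms) auto
    moreover have "0 \<le> (\<Sum>S\<in>{S. S \<subseteq> V \<and> e \<subseteq> S}. z S)"
      using u by (intro sum_nonneg nonneg) auto
    ultimately show ?thesis using cover[OF u(2)] unfolding cluster_lp_x_def by linarith
  qed
  then show ?thesis
    unfolding cluster_lp_feasible_def cluster_lp_x_def using nonneg cover by auto
qed

lemma cluster_lp_triangle:
  assumes feasible: "cluster_lp_feasible V z x" and "finite V"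
    and pq: "{p, q} \<in> pairs V" and qr: "{q, r} \<in> pairs V" and pr: "{p, r} \<in> pairs V"
  shows "x {p, r} \<le> x {p, q} + x {q, r}"
proof -
  have nonneg: "\<And>S. S \<subseteq> V \<Longrightarrow> S \<noteq> {} \<Longrightarrow> z S \<ge> 0"
    and cover: "\<And>u. u \<in> V \<Longrightarrow> (\<Sum>S\<in>{S. S \<subseteq> V \<and> S \<noteq> {} \<and> u \<in> S}. z S) = 1"
    and pair: "\<And>e. e \<in> pairs V \<Longrightarrow> (\<Sum>S\<in>{S. S \<subseteq> V \<and> e \<subseteq> S}. z S) = 1 - x e"
    using feasible unfolding cluster_lp_feasible_def by auto
  let ?A = "{S. S \<subseteq> V \<and> {p, q} \<subseteq> S}" and ?B = "{S. S \<subseteq> V \<and> {q, r} \<subseteq> S}"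
  have fin: "\<And>P. finite {S. S \<subseteq> V \<and> P S}" using \<open>finite V\<close> by (rule finite_subsets_containing)
  have "sum z ?A + sum z ?B = sum z (?A \<union> ?B) + sum z (?A \<inter> ?B)"
    using fin fin by (rule sum.union_inter[symmetric])
  also have "sum z (?A \<union> ?B) \<le> sum z {S. S \<subseteq> V \<and> S \<noteq> {} \<and> q \<in> S}"
    by (intro sum_mono2 fin) (use nonneg in auto)
  also have "sum z (?A \<inter> ?B) \<le> sum z {S. S \<subseteq> V \<and> {p, r} \<subseteq> S}"
    by (intro sum_mono2 fin) (use nonneg in auto)
  finally show ?thesis
    using pair[OF pq] pair[OF qr] pair[OF pr] cover[of q] pq unfolding pairs_def by simp
qed

lemma cc_obj_nonneg:
  assumes "Ep \<subseteq> pairs V" "cluster_lp_feasible V z x"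
  shows "0 \<le> cc_obj V Ep x"
proof -
  have x01: "0 \<le> x e" "x e \<le> 1" if "e \<in> pairs V" for e
    using assms(2) that unfolding cluster_lp_feasible_def by auto
  have "0 \<le> sum x Ep" using assms(1) x01 by (intro sum_nonneg) auto
  moreover have "0 \<le> (\<Sum>e\<in>pairs V - Ep. 1 - x e)" using x01 by (intro sum_nonneg) auto
  ultimately show ?thesis unfolding cc_obj_def by simp
qed

lemma cc_obj_ge_1_if_induced_path:
  assumes inst: "cc_instance V Ep" and feasible: "cluster_lp_feasible V z x"
    and pq: "{p, q} \<in> Ep" and qr: "{q, r} \<in> Ep" and pr: "{p, r} \<in> pairs V - Ep"
  shows "1 \<le> cc_obj V Ep x"
proof -
  have Ep: "Ep \<subseteq> pairs V" "finite Ep" and "finite V"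
    using inst finite_pairs finite_subset unfolding cc_instance_def by blast+
  have x01: "\<And>e. e \<in> pairs V \<Longrightarrow> 0 \<le> x e \<and> x e \<le> 1"
    using feasible unfolding cluster_lp_feasible_def by blast
  have "p \<noteq> r" using pr unfolding pairs_def by (auto simp: card_insert_if split: if_splits)
  then have "x {p, q} + x {q, r} = sum x {{p, q}, {q, r}}"
    by (subst sum.insert) (auto simp: doubleton_eq_iff)
  also have "\<dots> \<le> sum x Ep"
    using pq qr Ep x01 by (intro sum_mono2) auto
  finally have "x {p, q} + x {q, r} \<le> sum x Ep" .
  moreover have "1 - x {p, r} \<le> (\<Sum>e\<in>pairs V - Ep. 1 - x e)"
    using pr x01 \<open>finite V\<close> by (intro member_le_sum) (auto simp: finite_pairs)
  moreover have "x {p, r} \<le> x {p, q} + x {q, r}"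
    using cluster_lp_triangle[OF feasible \<open>finite V\<close>] pq qr pr Ep by blast
  ultimately show ?thesis unfolding cc_obj_def by linarith
qed

lemma cluster_lp_opt_le:
  assumes "Ep \<subseteq> pairs V" "cluster_lp_feasible V z x"
  shows "cluster_lp_opt V Ep \<le> cc_obj V Ep x"
  unfolding cluster_lp_opt_def
  using assms cc_obj_nonneg by (intro cInf_lower bdd_belowI[of _ 0]) blast+

lemma cluster_lp_opt_ge:
  assumes "cluster_lp_feasible V z x" "\<And>z x. cluster_lp_feasible V z x \<Longrightarrow> c \<le> cc_obj V Ep x"
  shows "c \<le> cluster_lp_opt V Ep"
  unfolding cluster_lp_opt_def using assms by (intro cInf_greatest) blast+

section \<open>Clusterings as colourings\<close>

definition colouring_cost :: "'a set \<Rightarrow> 'a set set \<Rightarrow> ('a \<Rightarrow> 'b) \<Rightarrow> nat" where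
  "colouring_cost V Ep cl =
     card {e \<in> Ep. \<not> monochromatic cl e} + card {e \<in> pairs V - Ep. monochromatic cl e}"

lemma cc_cost_eq_colouring_cost:
  assumes "Ep \<subseteq> pairs V" "partition_on V C"
  obtains cl :: "'a \<Rightarrow> 'a set" where "cc_cost V Ep C = colouring_cost V Ep cl"
proof
  define r where "r = {(x, y). \<exists>S\<in>C. x \<in> S \<and> y \<in> S}"
  have "equiv V r" unfolding r_def using assms(2) by (rule equiv_partition_on)
  have same_block: "(\<exists>S\<in>C. e \<subseteq> S) \<longleftrightarrow> monochromatic (\<lambda>p. r `` {p}) e"
    if "e \<in> pairs V" for e
  proof -
    obtain p q where e: "e = {p, q}" "p \<in> V" "q \<in> V"
      using \<open>e \<in> pairs V\<close> unfolding pairs_iff by blast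
    have "(\<exists>S\<in>C. e \<subseteq> S) \<longleftrightarrow> (p, q) \<in> r" unfolding r_def e(1) by simp
    also have "\<dots> \<longleftrightarrow> r `` {p} = r `` {q}"
      using equiv_class_eq_iff[OF \<open>equiv V r\<close>] e by blast
    finally show ?thesis unfolding e(1) monochromatic_doubleton .
  qed
  have "{e \<in> Ep. \<not> (\<exists>S\<in>C. e \<subseteq> S)} = {e \<in> Ep. \<not> monochromatic (\<lambda>p. r `` {p}) e}"
    using assms(1) same_block by blast
  moreover have "{e \<in> pairs V - Ep. \<exists>S\<in>C. e \<subseteq> S} =
      {e \<in> pairs V - Ep. monochromatic (\<lambda>p. r `` {p}) e}"
    using same_block by blast
  ultimately show "cc_cost V Ep C = colouring_cost V Ep (\<lambda>p. r `` {p})"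
    unfolding cc_cost_def colouring_cost_def by simp
qed

lemma cc_opt_ge_if_colouring_cost_ge:
  assumes "cc_instance V Ep" and "\<And>cl :: 'a \<Rightarrow> 'a set. n \<le> colouring_cost V Ep cl"
  shows "n \<le> cc_opt V Ep"
proof -
  have "finite V" "Ep \<subseteq> pairs V" using assms(1) unfolding cc_instance_def by auto
  let ?K = "{cc_cost V Ep C | C. partition_on V C}"
  have "finite ?K"
    using finitely_many_partition_on[OF \<open>finite V\<close>] by (simp add: setcompr_eq_image)
  moreover have "\<exists>C. partition_on V C"
    using partition_on_space[of V] partition_on_empty[of "{}"] by (cases "V = {}") auto
  then have "?K \<noteq> {}" by blast
  ultimately have "cc_opt V Ep \<in> ?K" unfolding cc_opt_def by (rule Min_in)
  then obtain C where "partition_on V C" "cc_opt V Ep = cc_cost V Ep C" by auto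
  then show ?thesis
    using cc_cost_eq_colouring_cost[OF \<open>Ep \<subseteq> pairs V\<close>] assms(2) by metis
qed

section \<open>The line graph of \<open>K\<^sub>m\<close>\<close>

locale triangular_graph =
  fixes m :: nat
  assumes four_le_m: "4 \<le> m"
begin

text \<open>Vertex \<open>p\<close> stands for the edge \<open>{p div m, p mod m}\<close> of \<open>K\<^sub>m\<close>; \<open>code\<close> inverts
  this on two-element subsets of \<open>{..<m}\<close>.\<close>

definition ends :: "nat \<Rightarrow> nat set" where
  "ends p = {p div m, p mod m}"

definition code :: "nat set \<Rightarrow> nat" where
  "code s = Min s * m + Max s"

definition verts :: "nat set" where
  "verts = code ` pairs {..<m}"

definition plus_edges :: "nat set set" where
  "plus_edges = {e. \<exists>p\<in>verts. \<exists>q\<in>verts. e = {p, q} \<and> p \<noteq> q \<and> ends p \<inter> ends q \<noteq> {}}"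

lemma ends_code: "s \<in> pairs {..<m} \<Longrightarrow> ends (code s) = s"
  unfolding pairs_iff
  by (auto simp: ends_def code_def insert_commute max_def min_def split: if_splits)

lemma code_in_verts: "s \<in> pairs {..<m} \<Longrightarrow> code s \<in> verts"
  unfolding verts_def by blast

lemma ends_in_pairs: "p \<in> verts \<Longrightarrow> ends p \<in> pairs {..<m}"
  and code_ends: "p \<in> verts \<Longrightarrow> code (ends p) = p"
  unfolding verts_def by (auto simp: ends_code)

lemma card_ends: "p \<in> verts \<Longrightarrow> card (ends p) = 2"
  and ends_subset: "p \<in> verts \<Longrightarrow> ends p \<subseteq> {..<m}"
  using ends_in_pairs unfolding pairs_def by auto

lemma ends_inject: "p \<in> verts \<Longrightarrow> q \<in> verts \<Longrightarrow> ends p = ends q \<longleftrightarrow> p = q"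
  by (metis code_ends)

lemma finite_verts: "finite verts"
  unfolding verts_def by (simp add: finite_pairs)

lemma card_verts: "card verts = m choose 2"
proof -
  have "inj_on code (pairs {..<m})" by (rule inj_onI) (metis ends_code)
  then show ?thesis unfolding verts_def by (simp add: card_image card_pairs)
qed

lemma card_Int_ends_le_1: "p \<in> verts \<Longrightarrow> q \<in> verts \<Longrightarrow> p \<noteq> q \<Longrightarrow> card (ends p \<inter> ends q) \<le> 1"
  by (metis card_Int_le_1_if_card_2 card_ends ends_inject)

lemma plus_edges_subset_pairs: "plus_edges \<subseteq> pairs verts"
  unfolding plus_edges_def subset_iff pairs_iff mem_Collect_eq by blast

lemma doubleton_in_plus_edges_iff:
  "p \<in> verts \<Longrightarrow> q \<in> verts \<Longrightarrow> p \<noteq> q \<Longrightarrow> {p, q} \<in> plus_edges \<longleftrightarrow> ends p \<inter> ends q \<noteq> {}"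
  unfolding plus_edges_def by (auto simp: doubleton_eq_iff Int_commute)

lemma cc_instance_plus_edges: "cc_instance verts plus_edges"
  unfolding cc_instance_def using finite_verts plus_edges_subset_pairs by simp

definition star :: "nat \<Rightarrow> nat set" where
  "star a = {p \<in> verts. a \<in> ends p}"

definition z_star :: "nat set \<Rightarrow> real" where
  "z_star S = (if S \<in> star ` {..<m} then 1/2 else 0)"

abbreviation x_star :: "nat set \<Rightarrow> real" where
  "x_star \<equiv> cluster_lp_x verts z_star"

lemma inj_on_star: "inj_on star {..<m}"
proof (rule inj_onI)
  fix a b assume ab: "a \<in> {..<m}" "b \<in> {..<m}" "star a = star b"
  show "a = b"
  proof (rule ccontr)
    assume "a \<noteq> b"
    have "\<exists>c. c < m \<and> c \<noteq> a \<and> c \<noteq> b" using four_le_m by presburger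
    then obtain c where c: "c < m" "c \<noteq> a" "c \<noteq> b" by blast
    have s: "{a, c} \<in> pairs {..<m}" using ab c unfolding pairs_iff by auto
    have "code {a, c} \<in> star a" "code {a, c} \<notin> star b"
      using code_in_verts[OF s] ends_code[OF s] c \<open>a \<noteq> b\<close> unfolding star_def by auto
    then show False using ab by simp
  qed
qed

lemma sum_z_star:
  assumes "B \<subseteq> verts" "B \<noteq> {}"
  shows "(\<Sum>S\<in>{S. S \<subseteq> verts \<and> B \<subseteq> S}. z_star S) = card (\<Inter>(ends ` B)) / 2"
proof -
  let ?A = "{S. S \<subseteq> verts \<and> B \<subseteq> S}"
  have common: "\<Inter>(ends ` B) \<subseteq> {..<m}" using assms ends_subset by blast
  have "?A \<inter> star ` {..<m} = star ` \<Inter>(ends ` B)"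
    using common assms(1) unfolding star_def by blast
  moreover have "card (star ` \<Inter>(ends ` B)) = card (\<Inter>(ends ` B))"
    using inj_on_subset[OF inj_on_star common] by (rule card_image)
  moreover have "(\<Sum>S\<in>?A. z_star S) = (\<Sum>S\<in>?A \<inter> star ` {..<m}. 1/2)"
    unfolding z_star_def using finite_subsets_containing[OF finite_verts]
    by (simp add: sum.If_cases)
  ultimately show ?thesis by simp
qed

lemma cluster_lp_feasible_z_star: "cluster_lp_feasible verts z_star x_star"
proof (rule cluster_lp_feasible_cluster_lp_x[OF finite_verts])
  show "z_star S \<ge> 0" for S unfolding z_star_def by simp
  fix u assume "u \<in> verts"
  moreover have "{S. S \<subseteq> verts \<and> S \<noteq> {} \<and> u \<in> S} = {S. S \<subseteq> verts \<and> {u} \<subseteq> S}" by auto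
  ultimately show "(\<Sum>S\<in>{S. S \<subseteq> verts \<and> S \<noteq> {} \<and> u \<in> S}. z_star S) = 1"
    using sum_z_star[of "{u}"] card_ends by simp
qed

lemma x_star_doubleton:
  assumes "p \<in> verts" "q \<in> verts" "p \<noteq> q"
  shows "x_star {p, q} = (if ends p \<inter> ends q = {} then 1 else 1/2)"
proof -
  have "card (ends p \<inter> ends q) \<le> 1" using card_Int_ends_le_1 assms by blast
  moreover have "finite (ends p \<inter> ends q)" by (simp add: ends_def)
  ultimately have "card (ends p \<inter> ends q) = (if ends p \<inter> ends q = {} then 0 else 1)"
    by (auto simp: le_Suc_eq)
  then show ?thesis
    using sum_z_star[of "{p, q}"] assms unfolding cluster_lp_x_def by auto
qed

lemma cc_obj_x_star: "cc_obj verts plus_edges x_star = card plus_edges / 2"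
proof -
  have half: "x_star e = 1/2" if e: "e \<in> plus_edges" for e
  proof -
    obtain p q where "e = {p, q}" "p \<in> verts" "q \<in> verts" "p \<noteq> q" "ends p \<inter> ends q \<noteq> {}"
      using e unfolding plus_edges_def by blast
    then show ?thesis using x_star_doubleton by simp
  qed
  have one: "x_star e = 1" if e: "e \<in> pairs verts - plus_edges" for e
  proof -
    obtain p q where "e = {p, q}" "p \<in> verts" "q \<in> verts" "p \<noteq> q"
      using DiffD1[OF e] unfolding pairs_iff by blast
    then show ?thesis using e x_star_doubleton doubleton_in_plus_edges_iff by simp
  qed
  have "sum x_star plus_edges = (\<Sum>e\<in>plus_edges. 1/2)"
    using half by (rule sum.cong[OF refl])
  moreover have "(\<Sum>e\<in>pairs verts - plus_edges. 1 - x_star e) = 0"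
    using one by (intro sum.neutral) simp
  ultimately show ?thesis unfolding cc_obj_def by simp
qed

lemma cluster_lp_opt_le_half_card_plus_edges:
  "cluster_lp_opt verts plus_edges \<le> card plus_edges / 2"
  using cluster_lp_opt_le[OF plus_edges_subset_pairs cluster_lp_feasible_z_star] cc_obj_x_star
  by simp

lemma one_le_cluster_lp_opt: "1 \<le> cluster_lp_opt verts plus_edges"
proof (rule cluster_lp_opt_ge[OF cluster_lp_feasible_z_star])
  have s: "{0, 1} \<in> pairs {..<m}" "{1, 2} \<in> pairs {..<m}" "{2, 3} \<in> pairs {..<m}"
    using four_le_m unfolding pairs_def by auto
  define p q r where "p = code {0, 1}" and "q = code {1, 2}" and "r = code {2, 3}"
  have V: "p \<in> verts" "q \<in> verts" "r \<in> verts"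
    unfolding p_def q_def r_def using s by (auto intro: code_in_verts)
  have E: "ends p = {0, 1}" "ends q = {1, 2}" "ends r = {2, 3}"
    unfolding p_def q_def r_def using s by (auto simp: ends_code)
  then have "ends p \<noteq> ends q" "ends q \<noteq> ends r" "ends p \<noteq> ends r"
    and meet: "ends p \<inter> ends q \<noteq> {}" "ends q \<inter> ends r \<noteq> {}" "ends p \<inter> ends r = {}"
    by (simp_all add: doubleton_eq_iff)
  then have "p \<noteq> q" "q \<noteq> r" "p \<noteq> r" by auto
  moreover have "{p, r} \<in> pairs verts" unfolding pairs_iff using V \<open>p \<noteq> r\<close> by blast
  ultimately have "{p, q} \<in> plus_edges" "{q, r} \<in> plus_edges" "{p, r} \<in> pairs verts - plus_edges"
    using V meet by (simp_all add: doubleton_in_plus_edges_iff)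
  then show "1 \<le> cc_obj verts plus_edges x" if "cluster_lp_feasible verts z x" for z x
    using cc_obj_ge_1_if_induced_path[OF cc_instance_plus_edges that] by blast
qed

definition triangle_verts :: "nat set \<Rightarrow> nat set" where
  "triangle_verts T = {p \<in> verts. ends p \<subseteq> T}"

definition triple_of :: "nat set \<Rightarrow> nat set" where
  "triple_of e = \<Union>(ends ` e)"

lemma finite_triangle_verts: "finite (triangle_verts T)"
  unfolding triangle_verts_def using finite_verts by simp

lemma triangle_verts_eq:
  assumes "T \<subseteq> {..<m}"
  shows "triangle_verts T = code ` pairs T"
proof -
  have T: "pairs T \<subseteq> pairs {..<m}" using assms by (rule pairs_mono)
  show ?thesis
  proof (intro set_eqI iffI)
    fix p assume "p \<in> triangle_verts T"
    then have "ends p \<in> pairs T" "p = code (ends p)"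
      using card_ends code_ends unfolding triangle_verts_def pairs_def by auto
    then show "p \<in> code ` pairs T" by blast
  next
    fix p assume "p \<in> code ` pairs T"
    then obtain s where s: "s \<in> pairs T" "p = code s" by blast
    then have "s \<in> pairs {..<m}" using T by blast
    then show "p \<in> triangle_verts T"
      using s code_in_verts ends_code unfolding triangle_verts_def pairs_def by auto
  qed
qed

lemma card_triangle_verts:
  assumes "T \<in> triples {..<m}"
  shows "card (triangle_verts T) = 3"
proof -
  have T: "T \<subseteq> {..<m}" "card T = 3" "finite T"
    using assms unfolding triples_def by (auto intro: card_ge_0_finite)
  have "pairs T \<subseteq> pairs {..<m}" using T(1) by (rule pairs_mono)
  then have "inj_on code (pairs T)" by (metis ends_code inj_onI subsetD)
  then show ?thesis using T by (simp add: triangle_verts_eq card_image card_pairs choose_two)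
qed

lemma triple_of_plus_edge:
  assumes "e \<in> plus_edges"
  shows "triple_of e \<in> triples {..<m}"
proof -
  obtain p q where pq: "e = {p, q}" "p \<in> verts" "q \<in> verts" "p \<noteq> q" "ends p \<inter> ends q \<noteq> {}"
    using assms unfolding plus_edges_def by blast
  have "card (ends p \<union> ends q) = 3"
    using pq by (intro card_Un_eq_3_if_card_2) (auto simp: card_ends ends_inject)
  moreover have "ends p \<union> ends q \<subseteq> {..<m}" using pq ends_subset by auto
  ultimately show ?thesis unfolding triples_def triple_of_def pq(1) by simp
qed

lemma plus_edges_over_triple:
  assumes T: "T \<in> triples {..<m}"
  shows "{e \<in> plus_edges. triple_of e = T} = pairs (triangle_verts T)"
proof (intro set_eqI iffI)
  fix e assume e: "e \<in> {e \<in> plus_edges. triple_of e = T}"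
  then obtain p q where pq: "e = {p, q}" "p \<in> verts" "q \<in> verts" "p \<noteq> q"
    unfolding plus_edges_def by blast
  moreover have "ends p \<subseteq> T" "ends q \<subseteq> T" using e unfolding pq(1) triple_of_def by auto
  ultimately show "e \<in> pairs (triangle_verts T)"
    unfolding pairs_iff triangle_verts_def by blast
next
  fix e assume "e \<in> pairs (triangle_verts T)"
  then obtain p q where "p \<in> triangle_verts T" "q \<in> triangle_verts T" and pq: "e = {p, q}" "p \<noteq> q"
    unfolding pairs_iff by blast
  then have pq': "p \<in> verts" "q \<in> verts" and sub: "ends p \<subseteq> T" "ends q \<subseteq> T"
    unfolding triangle_verts_def by auto
  have "card T = 3" "finite T" using T unfolding triples_def by (auto intro: card_ge_0_finite)
  have "ends p \<inter> ends q \<noteq> {}"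
  proof
    assume "ends p \<inter> ends q = {}"
    then have "card (ends p \<union> ends q) = card (ends p) + card (ends q)"
      by (intro card_Un_disjoint) (simp_all add: ends_def)
    then have "card (ends p \<union> ends q) = 4" using pq' card_ends by simp
    moreover have "card (ends p \<union> ends q) \<le> card T"
      using sub \<open>finite T\<close> by (intro card_mono) auto
    ultimately show False using \<open>card T = 3\<close> by simp
  qed
  moreover have "ends p \<union> ends q = T"
  proof (rule card_subset_eq[OF \<open>finite T\<close>])
    show "ends p \<union> ends q \<subseteq> T" using sub by simp
    show "card (ends p \<union> ends q) = card T"
      using \<open>card T = 3\<close> \<open>ends p \<inter> ends q \<noteq> {}\<close> pq pq'
      by (simp add: card_Un_eq_3_if_card_2 card_ends ends_inject)
  qed
  ultimately show "e \<in> {e \<in> plus_edges. triple_of e = T}"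
    using pq pq' doubleton_in_plus_edges_iff unfolding triple_of_def by simp
qed

lemma finite_plus_edges: "finite plus_edges"
  using finite_subset[OF plus_edges_subset_pairs finite_pairs[OF finite_verts]] .

lemma card_plus_edges: "card plus_edges = 3 * card (triples {..<m})"
proof -
  have "card plus_edges = (\<Sum>T\<in>triples {..<m}. card {e \<in> plus_edges. triple_of e = T})"
    using finite_plus_edges finite_triples triple_of_plus_edge
    by (intro card_eq_sum_card_fibres) auto
  also have "\<dots> = (\<Sum>T\<in>triples {..<m}. 3)"
  proof (rule sum.cong[OF refl])
    fix T assume "T \<in> triples {..<m}"
    then show "card {e \<in> plus_edges. triple_of e = T} = 3"
      by (simp add: plus_edges_over_triple card_pairs finite_triangle_verts card_triangle_verts
          choose_two)
  qed
  finally show ?thesis by simp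
qed

lemma three_card_triples: "3 * card (triples {..<m}) = (m - 2) * card verts"
proof -
  have "3 * (m choose 3) = m * ((m - 1) choose 2)"
    using binomial_absorption[of 2 m] by (simp add: numeral_3_eq_3)
  moreover have "(m - 2) * (m choose 2) = m * ((m - 1) choose 2)"
    using binomial_absorb_comp[of m 2] by simp
  ultimately show ?thesis by (simp add: card_triples card_verts)
qed

definition opposite :: "nat \<Rightarrow> nat set \<Rightarrow> nat" where
  "opposite a T = code (T - {a})"

lemma
  assumes "T \<in> triples {..<m}" "a \<in> T"
  shows opposite_in_triangle_verts: "opposite a T \<in> triangle_verts T"
    and ends_opposite: "ends (opposite a T) = T - {a}"
proof -
  have "T - {a} \<in> pairs {..<m}"
    using assms unfolding triples_def pairs_def by (auto simp: card_Diff_singleton)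
  then show "opposite a T \<in> triangle_verts T" "ends (opposite a T) = T - {a}"
    unfolding triangle_verts_def opposite_def using code_in_verts ends_code by auto
qed

lemma inj_on_opposite: "inj_on (opposite a) {T \<in> triples {..<m}. a \<in> T}"
proof (rule inj_onI)
  fix T T' assume T: "T \<in> {T \<in> triples {..<m}. a \<in> T}" and T': "T' \<in> {T \<in> triples {..<m}. a \<in> T}"
    and "opposite a T = opposite a T'"
  moreover have "T - {a} = ends (opposite a T)" "T' - {a} = ends (opposite a T')"
    using T T' by (simp_all add: ends_opposite)
  ultimately have "T - {a} = T' - {a}" by simp
  moreover have "a \<in> T" "a \<in> T'" using T T' by auto
  ultimately show "T = T'" by (metis insert_Diff)
qed

lemma card_star_meeting_le_2:
  assumes "q \<in> verts" "a \<notin> ends q"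
  shows "card {p \<in> star a. ends p \<inter> ends q \<noteq> {}} \<le> 2"
proof -
  have "{p \<in> star a. ends p \<inter> ends q \<noteq> {}} \<subseteq> (\<lambda>c. code {a, c}) ` ends q"
  proof
    fix p assume p: "p \<in> {p \<in> star a. ends p \<inter> ends q \<noteq> {}}"
    then obtain c where c: "c \<in> ends p" "c \<in> ends q" by auto
    have "p \<in> verts" "a \<in> ends p" using p unfolding star_def by auto
    moreover have "a \<noteq> c" using c assms(2) by auto
    ultimately have "{a, c} = ends p"
      using c(1) card_ends[OF \<open>p \<in> verts\<close>]
      by (intro card_subset_eq) (simp_all add: ends_def)
    then have "p = code {a, c}" using code_ends[OF \<open>p \<in> verts\<close>] by simp
    then show "p \<in> (\<lambda>c. code {a, c}) ` ends q" using c by auto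
  qed
  moreover have fin: "finite (ends q)" by (simp add: ends_def)
  ultimately have "card {p \<in> star a. ends p \<inter> ends q \<noteq> {}} \<le> card ((\<lambda>c. code {a, c}) ` ends q)"
    by (intro card_mono finite_imageI)
  also have "\<dots> \<le> card (ends q)" using fin by (rule card_image_le)
  finally show ?thesis using card_ends[OF assms(1)] by simp
qed

section \<open>Monochromatic triangles\<close>

definition mono_triangles :: "(nat \<Rightarrow> 'b) \<Rightarrow> nat set \<Rightarrow> nat set set" where
  "mono_triangles cl W =
     {T \<in> triples {..<m}. triangle_verts T \<subseteq> W \<and> monochromatic cl (triangle_verts T)}"

definition mono_minus_edges :: "(nat \<Rightarrow> 'b) \<Rightarrow> nat set \<Rightarrow> nat set set" where
  "mono_minus_edges cl W = {e \<in> pairs W - plus_edges. monochromatic cl e}"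

definition mono_star :: "(nat \<Rightarrow> 'b) \<Rightarrow> nat set \<Rightarrow> nat \<Rightarrow> 'b \<Rightarrow> nat set" where
  "mono_star cl W a k = {p \<in> W. a \<in> ends p \<and> cl p = k}"

lemma finite_mono_triangles: "finite (mono_triangles cl W)"
  unfolding mono_triangles_def by (simp add: finite_triples)

lemma card_mono_plus_edges:
  "card {e \<in> plus_edges. monochromatic cl e}
    \<le> card (triples {..<m}) + 2 * card (mono_triangles cl verts)"
proof -
  let ?P = "{e \<in> plus_edges. monochromatic cl e}" and ?M = "mono_triangles cl verts"
  have fibre: "card {e \<in> ?P. triple_of e = T} \<le> 1 + (if T \<in> ?M then 2 else 0)"
    if T: "T \<in> triples {..<m}" for T
  proof -
    have eq: "{e \<in> ?P. triple_of e = T} = {e \<in> pairs (triangle_verts T). monochromatic cl e}"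
      using plus_edges_over_triple[OF T] by blast
    have card3: "card (pairs (triangle_verts T)) = 3"
      using T by (simp add: card_pairs finite_triangle_verts card_triangle_verts choose_two)
    show ?thesis
    proof (cases "T \<in> ?M")
      case True
      have "card {e \<in> pairs (triangle_verts T). monochromatic cl e}
          \<le> card (pairs (triangle_verts T))"
        by (intro card_mono finite_pairs finite_triangle_verts) auto
      then show ?thesis using True eq card3 by simp
    next
      case False
      then have "\<not> monochromatic cl (triangle_verts T)"
        using T unfolding mono_triangles_def triangle_verts_def by auto
      then show ?thesis
        using False eq card_monochromatic_pairs_le_1 card_triangle_verts[OF T] by simp
    qed
  qed
  have "card ?P = (\<Sum>T\<in>triples {..<m}. card {e \<in> ?P. triple_of e = T})"
    using finite_plus_edges triple_of_plus_edge
    by (intro card_eq_sum_card_fibres finite_triples) auto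
  also have "\<dots> \<le> (\<Sum>T\<in>triples {..<m}. 1 + (if T \<in> ?M then 2 else 0))"
    using fibre by (rule sum_mono)
  also have "\<dots> = (\<Sum>T\<in>triples {..<m}. 1) + (\<Sum>T\<in>triples {..<m}. if T \<in> ?M then 2 else 0)"
    by (rule sum.distrib)
  also have "(\<Sum>T\<in>triples {..<m}. if T \<in> ?M then 2 else 0) = (\<Sum>T\<in>{T \<in> triples {..<m}. T \<in> ?M}. 2)"
    by (rule sum.inter_filter[symmetric, OF finite_triples]) simp
  also have "{T \<in> triples {..<m}. T \<in> ?M} = ?M"
    unfolding mono_triangles_def by auto
  finally show ?thesis by simp
qed

lemma opposite_in_mono_triangle:
  assumes "T \<in> mono_triangles cl W" "a \<in> T" "p \<in> triangle_verts T"
  shows "opposite a T \<in> W" "ends (opposite a T) = T - {a}" "cl (opposite a T) = cl p"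
proof -
  have T: "T \<in> triples {..<m}" "triangle_verts T \<subseteq> W" "monochromatic cl (triangle_verts T)"
    using assms(1) unfolding mono_triangles_def by auto
  then show "opposite a T \<in> W" "ends (opposite a T) = T - {a}"
    using opposite_in_triangle_verts[OF T(1) assms(2)] ends_opposite[OF T(1) assms(2)] by auto
  show "cl (opposite a T) = cl p"
    using T(3) opposite_in_triangle_verts[OF T(1) assms(2)] assms(3)
    unfolding monochromatic_def by blast
qed

lemma card_mono_triangles_through_le:
  assumes W: "W \<subseteq> verts" and p: "p \<in> W" "ends p = {a, b}" "a \<noteq> b"
  shows "card {T \<in> mono_triangles cl W. p \<in> triangle_verts T} \<le> card (mono_star cl W a (cl p)) - 1"
proof -
  let ?F = "{T \<in> mono_triangles cl W. p \<in> triangle_verts T}"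
  have "finite W" using W finite_verts finite_subset by blast
  have "?F \<subseteq> {T \<in> triples {..<m}. b \<in> T}"
    using p unfolding mono_triangles_def triangle_verts_def by auto
  then have "inj_on (opposite b) ?F" using inj_on_opposite inj_on_subset by blast
  moreover have img: "opposite b ` ?F \<subseteq> mono_star cl W a (cl p) - {p}"
  proof
    fix q assume "q \<in> opposite b ` ?F"
    then obtain T where T: "T \<in> mono_triangles cl W" "p \<in> triangle_verts T"
      and q: "q = opposite b T"
      by blast
    have "ends p \<subseteq> T" using T(2) unfolding triangle_verts_def by simp
    then have "b \<in> T" "a \<in> T" using p by auto
    then have "q \<in> W" "ends q = T - {b}" "cl q = cl p"
      using opposite_in_mono_triangle[OF T(1) _ T(2)] q by auto
    then show "q \<in> mono_star cl W a (cl p) - {p}"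
      using \<open>a \<in> T\<close> p unfolding mono_star_def by auto
  qed
  ultimately have "card ?F = card (opposite b ` ?F)" by (simp add: card_image)
  also have "\<dots> \<le> card (mono_star cl W a (cl p) - {p})"
    using img \<open>finite W\<close> unfolding mono_star_def by (intro card_mono) auto
  also have "\<dots> = card (mono_star cl W a (cl p)) - 1"
    using p by (simp add: mono_star_def)
  finally show ?thesis .
qed

lemma card_mono_triangles_le_if_small_stars:
  assumes W: "W \<subseteq> verts" and small: "\<And>a k. card (mono_star cl W a k) \<le> 3"
  shows "card (mono_triangles cl W) \<le> 2 * card W"
proof -
  let ?M = "mono_triangles cl W"
  have "finite W" using W finite_verts finite_subset by blast
  have "?M \<subseteq> (\<Union>p\<in>W. {T \<in> ?M. p \<in> triangle_verts T})"
  proof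
    fix T assume T: "T \<in> ?M"
    then have "T \<in> triples {..<m}" "triangle_verts T \<subseteq> W" unfolding mono_triangles_def by auto
    moreover obtain a where "a \<in> T"
      using \<open>T \<in> triples {..<m}\<close> unfolding triples_def by fastforce
    ultimately show "T \<in> (\<Union>p\<in>W. {T \<in> ?M. p \<in> triangle_verts T})"
      using T opposite_in_triangle_verts by blast
  qed
  then have "card ?M \<le> card (\<Union>p\<in>W. {T \<in> ?M. p \<in> triangle_verts T})"
    using \<open>finite W\<close> by (intro card_mono) (auto simp: finite_mono_triangles)
  also have "\<dots> \<le> (\<Sum>p\<in>W. card {T \<in> ?M. p \<in> triangle_verts T})"
    by (rule card_UN_le[OF \<open>finite W\<close>])
  also have "\<dots> \<le> (\<Sum>p\<in>W. 2)"
  proof (rule sum_mono)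
    fix p assume "p \<in> W"
    then obtain a b where ab: "ends p = {a, b}" "a \<noteq> b"
      using W card_ends by (metis card_2_iff subsetD)
    show "card {T \<in> ?M. p \<in> triangle_verts T} \<le> 2"
      using card_mono_triangles_through_le[OF W \<open>p \<in> W\<close> ab, where cl = cl] small[of a "cl p"]
      by linarith
  qed
  finally show ?thesis by simp
qed

lemma card_mono_triangles_meeting_star_le:
  fixes cl :: "nat \<Rightarrow> 'b" and W :: "nat set" and a :: nat and k :: 'b
  defines "A \<equiv> mono_star cl W a k"
  assumes W: "W \<subseteq> verts"
  shows "card {T \<in> mono_triangles cl W. \<not> triangle_verts T \<subseteq> W - A} \<le> card {q \<in> W - A. cl q = k}"
proof -
  let ?Y = "{T \<in> mono_triangles cl W. \<not> triangle_verts T \<subseteq> W - A}"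
  let ?F = "{q \<in> W - A. cl q = k}"
  have "finite W" using W finite_verts finite_subset by blast
  have through_a: "a \<in> T \<and> (\<exists>p \<in> triangle_verts T. cl p = k)" if T: "T \<in> ?Y" for T
  proof -
    have "triangle_verts T \<subseteq> W" using T unfolding mono_triangles_def by auto
    then obtain p where p: "p \<in> triangle_verts T" "p \<in> A" using T by blast
    then have "a \<in> ends p" "cl p = k" "ends p \<subseteq> T"
      unfolding A_def mono_star_def triangle_verts_def by auto
    then show ?thesis using p(1) by blast
  qed
  then have "?Y \<subseteq> {T \<in> triples {..<m}. a \<in> T}"
    unfolding mono_triangles_def by auto
  then have "inj_on (opposite a) ?Y" using inj_on_opposite inj_on_subset by blast
  moreover have img: "opposite a ` ?Y \<subseteq> ?F"
  proof
    fix q assume "q \<in> opposite a ` ?Y"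
    then obtain T where T: "T \<in> ?Y" and q: "q = opposite a T" by blast
    obtain p where "a \<in> T" "p \<in> triangle_verts T" "cl p = k" using through_a[OF T] by blast
    then have "q \<in> W" "ends q = T - {a}" "cl q = k"
      using opposite_in_mono_triangle[of T cl W a p] T q by auto
    then show "q \<in> ?F" unfolding A_def mono_star_def by simp
  qed
  ultimately have "card ?Y = card (opposite a ` ?Y)" by (simp add: card_image)
  also have "\<dots> \<le> card ?F" using img \<open>finite W\<close> by (intro card_mono) auto
  finally show ?thesis .
qed

lemma card_mono_triangles_remove_star:
  fixes cl :: "nat \<Rightarrow> 'b" and W :: "nat set" and a :: nat and k :: 'b
  defines "A \<equiv> mono_star cl W a k"
  assumes W: "W \<subseteq> verts"
  shows "card (mono_triangles cl W) \<le> card (mono_triangles cl (W - A)) + card {q \<in> W - A. cl q = k}"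
proof -
  let ?Y = "{T \<in> mono_triangles cl W. \<not> triangle_verts T \<subseteq> W - A}"
  have "mono_triangles cl W \<subseteq> mono_triangles cl (W - A) \<union> ?Y"
    unfolding mono_triangles_def by auto
  then have "card (mono_triangles cl W) \<le> card (mono_triangles cl (W - A) \<union> ?Y)"
    by (intro card_mono) (simp_all add: finite_mono_triangles)
  also have "\<dots> \<le> card (mono_triangles cl (W - A)) + card ?Y"
    by (rule card_Un_le)
  finally show ?thesis
    using card_mono_triangles_meeting_star_le[OF W, of cl a k] unfolding A_def by linarith
qed

lemma card_subset_star_le_card_disjoint:
  assumes "A \<subseteq> star a" "q \<in> verts" "a \<notin> ends q"
  shows "card A \<le> card {p \<in> A. ends p \<inter> ends q = {}} + 2"
proof -
  let ?meet = "{p \<in> A. ends p \<inter> ends q \<noteq> {}}"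
  have "A \<subseteq> verts" using assms(1) unfolding star_def by blast
  then have "finite A" using finite_verts by (rule finite_subset)
  have "?meet \<subseteq> {p \<in> star a. ends p \<inter> ends q \<noteq> {}}" using assms(1) by blast
  moreover have "finite {p \<in> star a. ends p \<inter> ends q \<noteq> {}}" by (simp add: star_def finite_verts)
  ultimately have "card ?meet \<le> card {p \<in> star a. ends p \<inter> ends q \<noteq> {}}"
    by (rule card_mono[rotated])
  also have "\<dots> \<le> 2" using assms(2,3) by (rule card_star_meeting_le_2)
  finally have "card ?meet \<le> 2" .
  have "card A = card ({p \<in> A. ends p \<inter> ends q = {}} \<union> ?meet)"
    by (rule arg_cong[where f = card]) blast
  also have "\<dots> = card {p \<in> A. ends p \<inter> ends q = {}} + card ?meet"
    using \<open>finite A\<close> by (intro card_Un_disjoint) auto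
  finally show ?thesis using \<open>card ?meet \<le> 2\<close> by linarith
qed

lemma card_mono_minus_edges_remove_star:
  fixes cl :: "nat \<Rightarrow> 'b" and W :: "nat set" and a :: nat and k :: 'b
  defines "A \<equiv> mono_star cl W a k"
  assumes W: "W \<subseteq> verts" and big: "4 \<le> card A"
  shows "card (mono_minus_edges cl (W - A)) + 2 * card {q \<in> W - A. cl q = k}
    \<le> card (mono_minus_edges cl W)"
proof -
  let ?F = "{q \<in> W - A. cl q = k}"
  let ?X = "(\<lambda>(q, p). {p, q}) ` (SIGMA q:?F. {p \<in> A. ends p \<inter> ends q = {}})"
  have "finite W" using W finite_verts finite_subset by blast
  then have "finite A" "finite ?F" unfolding A_def mono_star_def by auto
  moreover have "A \<subseteq> star a" using W unfolding A_def mono_star_def star_def by auto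
  then have "2 \<le> card {p \<in> A. ends p \<inter> ends q = {}}" if "q \<in> ?F" for q
    using card_subset_star_le_card_disjoint[of A a q] that W big
    unfolding A_def mono_star_def by auto
  ultimately have "2 * card ?F \<le> card ?X"
    by (intro card_doubletons_ge) auto
  moreover have "?X \<subseteq> mono_minus_edges cl W - mono_minus_edges cl (W - A)"
  proof
    fix e assume "e \<in> ?X"
    then obtain q p where "q \<in> ?F" "p \<in> {p \<in> A. ends p \<inter> ends q = {}}" and e: "e = {p, q}"
      by blast
    then have pq: "p \<in> W" "q \<in> W" "p \<noteq> q" "cl p = cl q" "ends p \<inter> ends q = {}" "p \<in> A"
      unfolding A_def mono_star_def by auto
    then have "{p, q} \<in> pairs W" unfolding pairs_iff by blast
    moreover have "{p, q} \<notin> pairs (W - A)" using pq(6) unfolding pairs_def by blast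
    moreover have "{p, q} \<notin> plus_edges" using pq W doubleton_in_plus_edges_iff by blast
    ultimately show "e \<in> mono_minus_edges cl W - mono_minus_edges cl (W - A)"
      using pq unfolding mono_minus_edges_def e by (simp add: monochromatic_doubleton)
  qed
  moreover have "finite (mono_minus_edges cl W)"
    unfolding mono_minus_edges_def using finite_pairs[OF \<open>finite W\<close>] by simp
  moreover have "mono_minus_edges cl (W - A) \<subseteq> mono_minus_edges cl W"
    unfolding mono_minus_edges_def using pairs_mono[of "W - A" W] by blast
  ultimately show ?thesis
    using card_mono[of "mono_minus_edges cl W - mono_minus_edges cl (W - A)" ?X]
      card_Diff_subset[of "mono_minus_edges cl (W - A)" "mono_minus_edges cl W"]
      card_mono[of "mono_minus_edges cl W" "mono_minus_edges cl (W - A)"]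
    by (simp add: finite_subset)
qed

lemma card_mono_triangles_le:
  "W \<subseteq> verts \<Longrightarrow> 2 * card (mono_triangles cl W) \<le> card (mono_minus_edges cl W) + 4 * card W"
proof (induction "card W" arbitrary: W rule: less_induct)
  case less
  have "finite W" using less.prems finite_verts finite_subset by blast
  show ?case
  proof (cases "\<exists>a k. 4 \<le> card (mono_star cl W a k)")
    case False
    have "card (mono_star cl W a k) \<le> 3" for a k
    proof -
      have "card (mono_star cl W a k) < 4" using False not_le by blast
      then show ?thesis by simp
    qed
    then have "card (mono_triangles cl W) \<le> 2 * card W"
      using less.prems by (rule card_mono_triangles_le_if_small_stars[rotated])
    then show ?thesis by simp
  next
    case True
    then obtain a k where big: "4 \<le> card (mono_star cl W a k)" by blast
    let ?A = "mono_star cl W a k"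
    have "?A \<subseteq> W" unfolding mono_star_def by auto
    moreover have "?A \<noteq> {}" using big by (metis card.empty not_numeral_le_zero)
    ultimately have "card (W - ?A) < card W"
      using \<open>finite W\<close> by (intro psubset_card_mono) auto
    then have "2 * card (mono_triangles cl (W - ?A))
        \<le> card (mono_minus_edges cl (W - ?A)) + 4 * card (W - ?A)"
      using less.prems by (intro less.hyps) auto
    moreover have "card (W - ?A) \<le> card W" using \<open>finite W\<close> by (rule card_mono) auto
    ultimately show ?thesis
      using card_mono_triangles_remove_star[OF less.prems, of cl a k]
        card_mono_minus_edges_remove_star[OF less.prems big]
      by linarith
  qed
qed

lemma colouring_cost_ge:
  "2 * card (triples {..<m}) \<le> colouring_cost verts plus_edges cl + 4 * card verts"
proof -
  let ?P = "{e \<in> plus_edges. monochromatic cl e}"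
  have "{e \<in> plus_edges. \<not> monochromatic cl e} = plus_edges - ?P" by blast
  then have "card {e \<in> plus_edges. \<not> monochromatic cl e} = card plus_edges - card ?P"
    using finite_plus_edges by (simp add: card_Diff_subset)
  then have "colouring_cost verts plus_edges cl
      = card plus_edges - card ?P + card (mono_minus_edges cl verts)"
    unfolding colouring_cost_def mono_minus_edges_def by simp
  moreover have "card ?P \<le> card plus_edges" using finite_plus_edges by (intro card_mono) auto
  ultimately show ?thesis
    using card_plus_edges card_mono_plus_edges[of cl] card_mono_triangles_le[OF subset_refl, of cl]
    by linarith
qed

lemma cc_opt_ge_triples: "2 * card (triples {..<m}) \<le> cc_opt verts plus_edges + 4 * card verts"
proof -
  have "2 * card (triples {..<m}) - 4 * card verts \<le> cc_opt verts plus_edges"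
    using colouring_cost_ge
    by (intro cc_opt_ge_if_colouring_cost_ge[OF cc_instance_plus_edges]) (simp add: le_diff_conv)
  then show ?thesis by linarith
qed

lemma cc_opt_ge_ratio:
  "(4/3 - 8 / (real m - 2)) * cluster_lp_opt verts plus_edges \<le> cc_opt verts plus_edges"
proof -
  let ?L = "cluster_lp_opt verts plus_edges" and ?c = "4/3 - 8 / (real m - 2)"
  let ?s = "real (card (triples {..<m}))" and ?v = "real (card verts)"
  have opt: "2 * ?s - 4 * ?v \<le> cc_opt verts plus_edges"
    using cc_opt_ge_triples by (simp add: of_nat_le_iff[symmetric] del: of_nat_le_iff)
  have L: "?L \<le> 3/2 * ?s"
    using cluster_lp_opt_le_half_card_plus_edges card_plus_edges by simp
  have "real (3 * card (triples {..<m})) = real ((m - 2) * card verts)"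
    by (simp only: three_card_triples)
  moreover have "real (m - 2) = real m - 2" using four_le_m by simp
  ultimately have "3 * ?s = (real m - 2) * ?v" by simp
  then have "?c * (3/2 * ?s) = 2 * ?s - 4 * ?v"
    using four_le_m by (simp add: field_simps)
  show ?thesis
  proof (cases "0 \<le> ?c")
    case True
    with L have "?c * ?L \<le> ?c * (3/2 * ?s)" by (rule mult_left_mono)
    then show ?thesis using opt \<open>?c * (3/2 * ?s) = _\<close> by linarith
  next
    case False
    then have "?c * ?L \<le> 0" using one_le_cluster_lp_opt by (simp add: mult_nonpos_nonneg)
    then show ?thesis by simp
  qed
qed

end

theorem theorem4:
  fixes \<epsilon> :: real
  assumes "\<epsilon> > 0"
  shows "\<exists>(V :: nat set) Ep. cc_instance V Ep \<and> cluster_lp_opt V Ep > 0 \<and>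
           real (cc_opt V Ep) \<ge> (4/3 - \<epsilon>) * cluster_lp_opt V Ep"
proof -
  define m where "m = nat \<lceil>8 / \<epsilon>\<rceil> + 4"
  have "8 / \<epsilon> \<le> real m - 2" "0 < real m - 2" unfolding m_def by linarith+
  then have "8 / (real m - 2) \<le> \<epsilon>"
    using assms by (simp add: pos_divide_le_eq mult.commute)
  interpret triangular_graph m by unfold_locales (simp add: m_def)
  let ?L = "cluster_lp_opt verts plus_edges"
  have "(4/3 - \<epsilon>) * ?L \<le> (4/3 - 8 / (real m - 2)) * ?L"
    using \<open>8 / (real m - 2) \<le> \<epsilon>\<close> one_le_cluster_lp_opt by (intro mult_right_mono) auto
  also have "\<dots> \<le> cc_opt verts plus_edges" by (rule cc_opt_ge_ratio)
  finally show ?thesis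
    using cc_instance_plus_edges one_le_cluster_lp_opt by fastforce
qed

end
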